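(* Let $\boldsymbol{P}$ be a feasible policy (as defined in the context). Then every entry of $\boldsymbol{Y}_{\boldsymbol{P}}$ is non-negative.
   Context: $M\ge2$ worker nodes, undirected graph with neighborhood indicators $d_{i,m}\in\{0,1\}$. $\boldsymbol{P}=[p_{i,m}]_{M\times M}$ has rows that are probability distributions; $t_{i,m}>0$ are iteration times; $\alpha>0$, $\rho>0$. Define $\overline{t}_i=\sum_m t_{i,m}p_{i,m}d_{i,m}$, $p_i=\frac{1/\overline{t}_i}{\sum_m 1/\overline{t}_m}$, $\gamma_{i,m}=\frac{d_{i,m}+d_{m,i}}{2p_{i,m}}$ (terms with $p_{i,m}=0$ taken as $0$). $\boldsymbol{Y}_{\boldsymbol{P}}=[y_{i,m}]$ with $y_{i,i}=1-2\alpha\rho\sum_{m\ne i}p_ip_{i,m}\gamma_{i,m}+\alpha^2\rho^2\sum_{m\ne i}(p_ip_{i,m}\gamma_{i,m}^2+p_mp_{m,i}\gamma_{m,i}^2)$ and, for $m\ne i$, $y_{i,m}=\alpha\rho(p_ip_{i,m}\gamma_{i,m}+p_mp_{m,i}\gamma_{m,i})-\alpha^2\rho^2(p_ip_{i,m}\gamma_{i,m}^2+p_mp_{m,i}\gamma_{m,i}^2)$. $\boldsymbol{P}$ is feasible if: there is $\overline{t}$ with $\overline{t}=\frac1M\sum_m t_{i,m}p_{i,m}d_{i,m}$ for all $i$; $p_{i,m}>\alpha\rho(d_{i,m}+d_{m,i})$ for all $i\ne m$ with $d_{i,m}\ne0$; $p_{i,m}=0$ whenever $d_{i,m}=0$;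 and $\sum_m p_{i,m}=1$ for all $i$. *)

theory Defs
  imports Complex_Main
begin

text \<open>Workers are indexed by 0..<M. d, P, t are M x M arrays given as functions nat => nat => real.\<close>

definition tbar :: "nat \<Rightarrow> (nat \<Rightarrow> nat \<Rightarrow> real) \<Rightarrow> (nat \<Rightarrow> nat \<Rightarrow> real) \<Rightarrow> (nat \<Rightarrow> nat \<Rightarrow> real) \<Rightarrow> nat \<Rightarrow> real" where
  "tbar M d P t i = (\<Sum>m<M. t i m * P i m * d i m)"

definition pnode :: "nat \<Rightarrow> (nat \<Rightarrow> nat \<Rightarrow> real) \<Rightarrow> (nat \<Rightarrow> nat \<Rightarrow> real) \<Rightarrow> (nat \<Rightarrow> nat \<Rightarrow> real) \<Rightarrow> nat \<Rightarrow> real" where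
  "pnode M d P t i = (1 / tbar M d P t i) / (\<Sum>m<M. 1 / tbar M d P t m)"

definition gam :: "(nat \<Rightarrow> nat \<Rightarrow> real) \<Rightarrow> (nat \<Rightarrow> nat \<Rightarrow> real) \<Rightarrow> nat \<Rightarrow> nat \<Rightarrow> real" where
  "gam d P i m = (if P i m = 0 then 0 else (d i m + d m i) / (2 * P i m))"

definition Ymat :: "nat \<Rightarrow> (nat \<Rightarrow> nat \<Rightarrow> real) \<Rightarrow> (nat \<Rightarrow> nat \<Rightarrow> real) \<Rightarrow> (nat \<Rightarrow> nat \<Rightarrow> real)
    \<Rightarrow> real \<Rightarrow> real \<Rightarrow> nat \<Rightarrow> nat \<Rightarrow> real" where
  "Ymat M d P t \<alpha> \<rho> i m =
    (let p = pnode M d P t; g = gam d P in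
     if i = m then
       1 - 2 * \<alpha> * \<rho> * (\<Sum>k\<in>{..<M} - {i}. p i * P i k * g i k)
         + \<alpha>\<^sup>2 * \<rho>\<^sup>2 * (\<Sum>k\<in>{..<M} - {i}. p i * P i k * (g i k)\<^sup>2 + p k * P k i * (g k i)\<^sup>2)
     else
       \<alpha> * \<rho> * (p i * P i m * g i m + p m * P m i * g m i)
         - \<alpha>\<^sup>2 * \<rho>\<^sup>2 * (p i * P i m * (g i m)\<^sup>2 + p m * P m i * (g m i)\<^sup>2))"

definition feasible :: "nat \<Rightarrow> (nat \<Rightarrow> nat \<Rightarrow> real) \<Rightarrow> (nat \<Rightarrow> nat \<Rightarrow> real) \<Rightarrow> (nat \<Rightarrow> nat \<Rightarrow> real)
    \<Rightarrow> real \<Rightarrow> real \<Rightarrow> bool" where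
  "feasible M d P t \<alpha> \<rho> \<longleftrightarrow>
     (\<exists>tb. \<forall>i<M. tb = (1 / real M) * (\<Sum>m<M. t i m * P i m * d i m)) \<and>
     (\<forall>i<M. \<forall>m<M. i \<noteq> m \<and> d i m \<noteq> 0 \<longrightarrow> P i m > \<alpha> * \<rho> * (d i m + d m i)) \<and>
     (\<forall>i<M. \<forall>m<M. d i m = 0 \<longrightarrow> P i m = 0) \<and>
     (\<forall>i<M. (\<Sum>m<M. P i m) = 1)"

end

theory Submission
  imports Defs
begin

text \<open>Write c = \<alpha>\<rho>. The feasibility bound p_{i,m} > c (d_{i,m} + d_{m,i}) for d_{i,m} \<noteq> 0
  says exactly that 0 \<le> c \<gamma>_{i,m} \<le> 1/2 (and \<gamma>_{i,m} = 0 when d_{i,m} = 0). An off-diagonal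
  entry of Y is a sum of two terms w c \<gamma> (1 - c \<gamma>) with w = p_i p_{i,m} \<ge> 0, hence non-negative.
  On the diagonal, 2 c \<gamma>_{i,k} \<le> 1 gives 2 c \<Sum>_k p_i p_{i,k} \<gamma>_{i,k} \<le> p_i \<Sum>_k p_{i,k} \<le> 1, and
  the quadratic term is non-negative.\<close>

lemma divide_sum_nonneg_bounds:
  fixes x :: "'a \<Rightarrow> real"
  assumes "finite A" and "\<forall>a\<in>A. 0 \<le> x a" and "i \<in> A"
  shows "0 \<le> x i / sum x A \<and> x i / sum x A \<le> 1"
proof -
  have "x i \<le> sum x A"
    using assms by (intro member_le_sum) auto
  then show ?thesis
    using assms by (auto simp: divide_le_eq_1)
qed

lemma tbar_nonneg:
  assumes "\<forall>m<M. 0 < t i m" and "\<forall>m<M. 0 \<le> P i m" and "\<forall>m<M. 0 \<le> d i m"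
  shows "0 \<le> tbar M d P t i"
  unfolding tbar_def using assms by (intro sum_nonneg) (simp add: less_imp_le)

lemma pnode_bounds:
  assumes "\<forall>m<M. 0 \<le> tbar M d P t m" and "i < M"
  shows "0 \<le> pnode M d P t i \<and> pnode M d P t i \<le> 1"
  unfolding pnode_def using assms by (intro divide_sum_nonneg_bounds) auto

lemma gam_scaled_bounds:
  fixes c :: real
  assumes "0 \<le> c" and "0 \<le> d i k" and "0 \<le> d k i"
    and "d i k \<noteq> 0 \<Longrightarrow> c * (d i k + d k i) < P i k"
    and "d i k = 0 \<Longrightarrow> P i k = 0"
  shows "0 \<le> c * gam d P i k \<and> c * gam d P i k \<le> 1/2"
proof (cases "d i k = 0")
  case True
  then show ?thesis using assms(5) by (simp add: gam_def)
next
  case False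
  have bound: "c * (d i k + d k i) < P i k" using assms(4) False .
  moreover have "0 \<le> c * (d i k + d k i)" using assms(1-3) by simp
  ultimately have "0 < P i k" by linarith
  then show ?thesis
    using bound assms(1-3) by (simp add: gam_def field_simps)
qed

lemma damped_term_nonneg:
  fixes a r w g :: real
  assumes "0 \<le> w" and "0 \<le> a * r * g" and "a * r * g \<le> 1"
  shows "0 \<le> a * r * (w * g) - a\<^sup>2 * r\<^sup>2 * (w * g\<^sup>2)"
proof -
  have "a * r * (w * g) - a\<^sup>2 * r\<^sup>2 * (w * g\<^sup>2) = w * ((a * r * g) * (1 - a * r * g))"
    by (simp add: power2_eq_square algebra_simps)
  also have "0 \<le> \<dots>" using assms by simp
  finally show ?thesis .
qed

lemma Ymat_offdiag_nonneg:
  assumes "i < M" "m < M" "i \<noteq> m"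
    and p: "\<forall>j<M. 0 \<le> pnode M d P t j"
    and P: "\<forall>j<M. \<forall>k<M. 0 \<le> P j k"
    and g: "\<forall>j<M. \<forall>k<M. j \<noteq> k \<longrightarrow> 0 \<le> \<alpha> * \<rho> * gam d P j k \<and> \<alpha> * \<rho> * gam d P j k \<le> 1/2"
  shows "0 \<le> Ymat M d P t \<alpha> \<rho> i m"
proof -
  let ?p = "pnode M d P t" and ?g = "gam d P"
  have term_nonneg: "0 \<le> \<alpha> * \<rho> * (?p a * P a b * ?g a b) - \<alpha>\<^sup>2 * \<rho>\<^sup>2 * (?p a * P a b * (?g a b)\<^sup>2)"
    if "a < M" "b < M" "a \<noteq> b" for a b
    using damped_term_nonneg[of "?p a * P a b" \<alpha> \<rho> "?g a b"] p P g that by fastforce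
  have "Ymat M d P t \<alpha> \<rho> i m =
       (\<alpha> * \<rho> * (?p i * P i m * ?g i m) - \<alpha>\<^sup>2 * \<rho>\<^sup>2 * (?p i * P i m * (?g i m)\<^sup>2))
     + (\<alpha> * \<rho> * (?p m * P m i * ?g m i) - \<alpha>\<^sup>2 * \<rho>\<^sup>2 * (?p m * P m i * (?g m i)\<^sup>2))"
    using \<open>i \<noteq> m\<close> unfolding Ymat_def Let_def by (simp add: algebra_simps)
  then show ?thesis
    using term_nonneg[of i m] term_nonneg[of m i] assms(1-3) by simp
qed

lemma Ymat_diag_nonneg:
  assumes "i < M"
    and p: "\<forall>j<M. 0 \<le> pnode M d P t j" "pnode M d P t i \<le> 1"
    and P: "\<forall>j<M. \<forall>k<M. 0 \<le> P j k" and row: "(\<Sum>k<M. P i k) = 1"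
    and g: "\<forall>k<M. k \<noteq> i \<longrightarrow> \<alpha> * \<rho> * gam d P i k \<le> 1/2"
  shows "0 \<le> Ymat M d P t \<alpha> \<rho> i i"
proof -
  let ?p = "pnode M d P t" and ?g = "gam d P" and ?K = "{..<M} - {i}"
  have "2 * \<alpha> * \<rho> * (\<Sum>k\<in>?K. ?p i * P i k * ?g i k)
        = ?p i * (\<Sum>k\<in>?K. P i k * (2 * (\<alpha> * \<rho> * ?g i k)))"
    by (simp add: sum_distrib_left algebra_simps)
  also have "\<dots> \<le> ?p i * (\<Sum>k\<in>?K. P i k)"
    using assms(1) p P g by (intro mult_left_mono sum_mono mult_left_le) auto
  also have "\<dots> \<le> ?p i * (\<Sum>k<M. P i k)"
    using assms(1) p P by (intro mult_left_mono sum_mono2) auto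
  also have "\<dots> \<le> 1" using p(2) row by simp
  finally have "2 * \<alpha> * \<rho> * (\<Sum>k\<in>?K. ?p i * P i k * ?g i k) \<le> 1" .
  moreover have "0 \<le> (\<Sum>k\<in>?K. ?p i * P i k * (?g i k)\<^sup>2 + ?p k * P k i * (?g k i)\<^sup>2)"
    using assms(1) p P by (intro sum_nonneg) auto
  ultimately show ?thesis unfolding Ymat_def Let_def by simp
qed

theorem lemma2:
  fixes M :: nat and d P t :: "nat \<Rightarrow> nat \<Rightarrow> real" and \<alpha> \<rho> :: real
  assumes "M \<ge> 2"
    and "\<forall>i<M. \<forall>m<M. d i m = 0 \<or> d i m = 1"
    and "\<forall>i<M. \<forall>m<M. d i m = d m i"
    and "\<forall>i<M. \<forall>m<M. P i m \<ge> 0"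
    and "\<forall>i<M. (\<Sum>m<M. P i m) = 1"
    and "\<forall>i<M. \<forall>m<M. t i m > 0"
    and "\<alpha> > 0" and "\<rho> > 0"
    and "feasible M d P t \<alpha> \<rho>"
  shows "\<forall>i<M. \<forall>m<M. Ymat M d P t \<alpha> \<rho> i m \<ge> 0"
proof (intro allI impI)
  fix i m assume "i < M" "m < M"
  have d_nonneg: "\<forall>j<M. \<forall>k<M. 0 \<le> d j k"
    using assms(2) by force
  then have "\<forall>j<M. 0 \<le> tbar M d P t j"
    using assms(4,6) by (simp add: tbar_nonneg)
  then have p: "\<forall>j<M. 0 \<le> pnode M d P t j \<and> pnode M d P t j \<le> 1"
    by (simp add: pnode_bounds)
  have g: "\<forall>j<M. \<forall>k<M. j \<noteq> k \<longrightarrow> 0 \<le> \<alpha> * \<rho> * gam d P j k \<and> \<alpha> * \<rho> * gam d P j k \<le> 1/2"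
    using assms(7,8,9) d_nonneg unfolding feasible_def
    by (intro allI impI gam_scaled_bounds) auto
  show "0 \<le> Ymat M d P t \<alpha> \<rho> i m"
  proof (cases "i = m")
    case True
    then show ?thesis
      using Ymat_diag_nonneg[of i M d P t \<alpha> \<rho>] \<open>i < M\<close> p g assms(4,5) by auto
  next
    case False
    then show ?thesis
      using Ymat_offdiag_nonneg \<open>i < M\<close> \<open>m < M\<close> p g assms(4) by simp
  qed
qed

end
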